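(* Let $\mathrm{dist}$ be a weak semantic distance metric for CQs. Then $\preceq^{\mathrm{dist}}$ is a proximity pre-order.
   Context: CQs are conjunctive queries $q(x_1,\dots,x_k)\text{ :- }\alpha_1,\dots,\alpha_n$ (relational atoms without constants, each answer variable in some atom); $q_1\equiv q_2$ means the queries return the same answers on every database instance. A weak semantic distance metric for CQs is a function $\mathrm{dist}$ from pairs of CQs of the same arity to non-negative reals such that $\mathrm{dist}(q_1,q_2)=\mathrm{dist}(q_2,q_1)$, $\mathrm{dist}(q_1,q_2)=0$ whenever $q_1\equiv q_2$, and $\mathrm{dist}(q_1,q_2)\le\mathrm{dist}(q_1,q_3)+\mathrm{dist}(q_3,q_2)$. The induced order: $q'\preceq^{\mathrm{dist}}_q q''$ iff $\mathrm{dist}(q,q')\le\mathrm{dist}(q,q'')$. A proximity pre-order is a family of pre-orders $\preceq_q$ on CQs, one for each CQ $q$, satisfying conservativeness ($q\preceq_q q'$ for all CQs $q,q'$) and syntax independence (whenever $q_1'\equiv q_1$, $q_2'\equiv q_2$, $q_3'\equiv q_3$, then $q_1\preceq_{q_2}q_3$ iff $q_1'\preceq_{q_2'}q_3'$). *)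

theory Defs
  imports Complex_Main
begin

(* A conjunctive query q(x_1,...,x_k) :- alpha_1,...,alpha_n over relation names 'r and
   variables 'v: the head is the list of answer variables, the body a list of atoms
   R(y_1,...,y_m) (no constants). *)
type_synonym ('r, 'v) cq = "'v list \<times> ('r \<times> 'v list) list"

definition cq_head :: "('r, 'v) cq \<Rightarrow> 'v list" where
  "cq_head q = fst q"

definition cq_body :: "('r, 'v) cq \<Rightarrow> ('r \<times> 'v list) list" where
  "cq_body q = snd q"

definition cq_arity :: "('r, 'v) cq \<Rightarrow> nat" where
  "cq_arity q = length (cq_head q)"

definition is_cq :: "('r, 'v) cq \<Rightarrow> bool" where
  "is_cq q \<longleftrightarrow> cq_body q \<noteq> [] \<and>
     (\<forall>x \<in> set (cq_head q). \<exists>a \<in> set (cq_body q). x \<in> set (snd a))"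

(* database instance: finite set of facts over a countably infinite domain of constants *)
type_synonym 'r db = "('r \<times> nat list) set"

definition cq_answers :: "('r, 'v) cq \<Rightarrow> 'r db \<Rightarrow> nat list set" where
  "cq_answers q D = {map h (cq_head q) | h.
      \<forall>a \<in> set (cq_body q). (fst a, map h (snd a)) \<in> D}"

definition cq_equiv :: "('r, 'v) cq \<Rightarrow> ('r, 'v) cq \<Rightarrow> bool" where
  "cq_equiv q1 q2 \<longleftrightarrow> (\<forall>D :: 'r db. finite D \<longrightarrow> cq_answers q1 D = cq_answers q2 D)"

(* d is only meaningful on pairs of CQs of the same arity *)
definition weak_semantic_distance :: "(('r, 'v) cq \<Rightarrow> ('r, 'v) cq \<Rightarrow> real) \<Rightarrow> bool" where
  "weak_semantic_distance d \<longleftrightarrow>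
     (\<forall>q1 q2. is_cq q1 \<and> is_cq q2 \<and> cq_arity q1 = cq_arity q2 \<longrightarrow>
        d q1 q2 \<ge> 0 \<and> d q1 q2 = d q2 q1 \<and>
        (cq_equiv q1 q2 \<longrightarrow> d q1 q2 = 0)) \<and>
     (\<forall>q1 q2 q3. is_cq q1 \<and> is_cq q2 \<and> is_cq q3 \<and>
        cq_arity q1 = cq_arity q2 \<and> cq_arity q3 = cq_arity q1 \<longrightarrow>
        d q1 q2 \<le> d q1 q3 + d q3 q2)"

(* induced order: dist_order d q q' q''  means  q' \<preceq>^dist_q q'' *)
definition dist_order ::
  "(('r, 'v) cq \<Rightarrow> ('r, 'v) cq \<Rightarrow> real) \<Rightarrow> ('r, 'v) cq \<Rightarrow> ('r, 'v) cq \<Rightarrow> ('r, 'v) cq \<Rightarrow> bool" where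
  "dist_order d q q' q'' \<longleftrightarrow> d q q' \<le> d q q''"

(* P q q1 q2 means q1 \<preceq>_q q2; each \<preceq>_q is a pre-order on the CQs of the arity of q *)
definition proximity_preorder ::
  "(('r, 'v) cq \<Rightarrow> ('r, 'v) cq \<Rightarrow> ('r, 'v) cq \<Rightarrow> bool) \<Rightarrow> bool" where
  "proximity_preorder P \<longleftrightarrow>
     (\<forall>q. is_cq q \<longrightarrow>
        (\<forall>q1. is_cq q1 \<and> cq_arity q1 = cq_arity q \<longrightarrow> P q q1 q1) \<and>
        (\<forall>q1 q2 q3. is_cq q1 \<and> is_cq q2 \<and> is_cq q3 \<and> cq_arity q1 = cq_arity q \<and>
           cq_arity q2 = cq_arity q \<and> cq_arity q3 = cq_arity q \<and>
           P q q1 q2 \<and> P q q2 q3 \<longrightarrow> P q q1 q3)) \<and>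
     (\<forall>q q'. is_cq q \<and> is_cq q' \<and> cq_arity q' = cq_arity q \<longrightarrow> P q q q') \<and>
     (\<forall>q1 q2 q3 q1' q2' q3'.
        is_cq q1 \<and> is_cq q2 \<and> is_cq q3 \<and> is_cq q1' \<and> is_cq q2' \<and> is_cq q3' \<and>
        cq_arity q1 = cq_arity q2 \<and> cq_arity q3 = cq_arity q2 \<and>
        cq_equiv q1' q1 \<and> cq_equiv q2' q2 \<and> cq_equiv q3' q3 \<longrightarrow>
        (P q2 q1 q3 \<longleftrightarrow> P q2' q1' q3'))"

end

theory Submission
  imports Defs
begin

(* A weak semantic distance vanishes on equivalent queries, so by the triangle inequality
   it is constant on pairs of equivalence classes; hence the induced order cannot tell
   equivalent queries apart. Comparing real numbers makes each induced order a pre-order,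
   and conservativeness is d(q,q) = 0 <= d(q,q'). *)

lemma cq_equiv_refl: "cq_equiv q q"
  unfolding cq_equiv_def by simp

lemma cq_equiv_sym: "cq_equiv q1 q2 \<Longrightarrow> cq_equiv q2 q1"
  unfolding cq_equiv_def by simp

lemma cq_equiv_arity:
  fixes q1 q2 :: "('r, 'v) cq"
  assumes "cq_equiv q1 q2"
  shows "cq_arity q1 = cq_arity q2"
proof -
  \<comment> \<open>On its own body, frozen by sending every variable to 0, q1 has an answer of
    length its arity; that answer must also be one of q2.\<close>
  define h :: "'v \<Rightarrow> nat" where "h = (\<lambda>_. 0)"
  define D :: "'r db" where "D = (\<lambda>a. (fst a, map h (snd a))) ` set (cq_body q1)"
  have "map h (cq_head q1) \<in> cq_answers q1 D"
    unfolding cq_answers_def D_def by blast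
  moreover have "finite D"
    unfolding D_def by simp
  ultimately have "map h (cq_head q1) \<in> cq_answers q2 D"
    using assms unfolding cq_equiv_def by blast
  then obtain h' where "map h (cq_head q1) = map h' (cq_head q2)"
    unfolding cq_answers_def by blast
  then show ?thesis
    unfolding cq_arity_def by (metis length_map)
qed

context
  fixes d :: "('r, 'v) cq \<Rightarrow> ('r, 'v) cq \<Rightarrow> real"
  assumes dist: "weak_semantic_distance d"
begin

lemma weak_semantic_distance_nonneg:
  "is_cq q1 \<Longrightarrow> is_cq q2 \<Longrightarrow> cq_arity q1 = cq_arity q2 \<Longrightarrow> d q1 q2 \<ge> 0"
  using dist unfolding weak_semantic_distance_def by blast

lemma weak_semantic_distance_equiv_eq_0:
  "is_cq q1 \<Longrightarrow> is_cq q2 \<Longrightarrow> cq_equiv q1 q2 \<Longrightarrow> d q1 q2 = 0"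
  using dist cq_equiv_arity unfolding weak_semantic_distance_def by blast

lemma weak_semantic_distance_triangle:
  "is_cq q1 \<Longrightarrow> is_cq q2 \<Longrightarrow> is_cq q3 \<Longrightarrow> cq_arity q1 = cq_arity q2 \<Longrightarrow>
    cq_arity q3 = cq_arity q1 \<Longrightarrow> d q1 q2 \<le> d q1 q3 + d q3 q2"
  using dist unfolding weak_semantic_distance_def by blast

lemma weak_semantic_distance_self: "is_cq q \<Longrightarrow> d q q = 0"
  using weak_semantic_distance_equiv_eq_0 cq_equiv_refl by blast

lemma weak_semantic_distance_equiv_le:
  assumes cq: "is_cq q1" "is_cq q2" "is_cq q1'" "is_cq q2'"
    and arity: "cq_arity q1 = cq_arity q2"
    and equiv: "cq_equiv q1' q1" "cq_equiv q2' q2"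
  shows "d q1 q2 \<le> d q1' q2'"
proof -
  have arity': "cq_arity q1' = cq_arity q1" "cq_arity q2' = cq_arity q2"
    using equiv cq_equiv_arity by blast+
  have "d q1 q2 \<le> d q1 q1' + d q1' q2"
    using weak_semantic_distance_triangle cq arity arity' by simp
  moreover have "d q1' q2 \<le> d q1' q2' + d q2' q2"
    using weak_semantic_distance_triangle cq arity arity' by simp
  moreover have "d q1 q1' = 0" and "d q2' q2 = 0"
    using weak_semantic_distance_equiv_eq_0 cq equiv cq_equiv_sym by blast+
  ultimately show ?thesis
    by linarith
qed

lemma weak_semantic_distance_equiv_eq:
  assumes "is_cq q1" "is_cq q2" "is_cq q1'" "is_cq q2'"
    and "cq_arity q1 = cq_arity q2"
    and "cq_equiv q1' q1" "cq_equiv q2' q2"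
  shows "d q1' q2' = d q1 q2"
proof -
  have "cq_arity q1' = cq_arity q2'"
    using assms cq_equiv_arity by metis
  then show ?thesis
    using assms weak_semantic_distance_equiv_le cq_equiv_sym by (metis order_antisym)
qed

end

theorem proposition29:
  fixes d :: "('r, 'v) cq \<Rightarrow> ('r, 'v) cq \<Rightarrow> real"
  assumes "weak_semantic_distance d"
  shows "proximity_preorder (dist_order d)"
  unfolding proximity_preorder_def dist_order_def
proof (intro conjI allI impI)
  fix q q' :: "('r, 'v) cq"
  assume "is_cq q \<and> is_cq q' \<and> cq_arity q' = cq_arity q"
  then show "d q q \<le> d q q'"
    using weak_semantic_distance_self[OF assms] weak_semantic_distance_nonneg[OF assms]
    by simp
next
  fix q1 q2 q3 q1' q2' q3' :: "('r, 'v) cq"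
  assume "is_cq q1 \<and> is_cq q2 \<and> is_cq q3 \<and> is_cq q1' \<and> is_cq q2' \<and> is_cq q3' \<and>
    cq_arity q1 = cq_arity q2 \<and> cq_arity q3 = cq_arity q2 \<and>
    cq_equiv q1' q1 \<and> cq_equiv q2' q2 \<and> cq_equiv q3' q3"
  then have "d q2' q1' = d q2 q1" and "d q2' q3' = d q2 q3"
    using weak_semantic_distance_equiv_eq[OF assms] by simp_all
  then show "d q2 q1 \<le> d q2 q3 \<longleftrightarrow> d q2' q1' \<le> d q2' q3'"
    by simp
qed auto

end
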